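(* Let $A,B\in\mathbb D[X]$ both have degree $d$ and valuation $0$, with symmetric subresultants $(S_i)_{-1\le i\le d}$. Let $j\in\{1,\dots,d-1\}$ be such that $(S_j,S_{j+1})$ is $(\alpha,\beta)$-defective, and put $k=j+\alpha+\beta$. Then the symmetric quotient $\mathrm{squo}\big(\mathrm{lc}(S_{j+1})S_k(0)S_j,\ S_{j+1}\big)$ belongs to $\mathbb D[X]$, and so does the symmetric remainder $\mathrm{srem}\big(\mathrm{lc}(S_{j+1})S_k(0)S_j,\ S_{j+1}\big)$.
   Context: Let $\mathbb D$ be a subring of $\mathbb C$, $\mathbb D'$ its fraction field. For a nonzero polynomial $P$: $v(P)$ is the largest $v$ with $X^v\mid P$; $\mathrm{lc}(P)$ is its leading coefficient. Symmetric subresultants: let $A=\sum_{i=0}^d a_iX^i$, $B=\sum_{i=0}^d b_iX^i\in\mathbb D[X]$ with $\deg A=d\ge1$ ($B$ of formal degree $d$). Put $a_i=b_i=0$ for $i<0$ or $i>d$. For $1\le j\le d$ and $0\le\ell\le d-j$, let $\mathrm{Sylv}_{j,\ell}$ be the $2j\times 2j$ matrix whose $r$-th row, for $1\le r\le j$, is $(a_{1-r},a_{2-r},\dots,a_{j-1-r},\ a_{j-r+\ell},\ a_{d+1-r},a_{d+2-r},\dots,a_{d+j-r})$, and whose $(j+r)$-th row is the same with every $a$ replaced by $b$. The symmetric subresultants of $(A,B)$ are $S_{-1}=A$, $S_0=B$, $S_j=\sum_{\ell=0}^{d-j}\det(\mathrm{Sylv}_{j,\ell})X^\ell$ for $1\le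 j\le d$. Defectivity: for $0\le j\le d-1$, the pair $(S_j,S_{j+1})$ is $(\alpha,\beta)$-defective if $v(S_j)=0$, $\deg S_j=d-j$, $S_{j+1}\ne0$, $v(S_{j+1})=\alpha$ and $\deg S_{j+1}=d-j-\beta$. Symmetric division: for $P,P_1\in\mathbb D[X]$ with $P_1\neq0$, $\deg P=n\ge\deg P_1=n-\beta$, $v(P_1)=\alpha$, $\mathrm{squo}(P,P_1)$ and $\mathrm{srem}(P,P_1)$ are the unique $Q,R\in\mathbb D'[X]$ with $\deg Q=\alpha+\beta$, $\deg R<n-\alpha-\beta$ and $P=Q\,P_1/X^\alpha+X^\beta R$. *)

theory Defs
  imports "HOL-Computational_Algebra.Polynomial" "Jordan_Normal_Form.Determinant"
begin

definition subring_C :: "complex set \<Rightarrow> bool" where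
  "subring_C D \<longleftrightarrow> 0 \<in> D \<and> 1 \<in> D \<and>
     (\<forall>x\<in>D. \<forall>y\<in>D. x + y \<in> D \<and> x - y \<in> D \<and> x * y \<in> D)"

definition in_Dpoly :: "complex set \<Rightarrow> complex poly \<Rightarrow> bool" where
  "in_Dpoly D p \<longleftrightarrow> (\<forall>i. coeff p i \<in> D)"

definition val :: "complex poly \<Rightarrow> nat" where
  "val P = order 0 P"

definition cf :: "complex poly \<Rightarrow> nat \<Rightarrow> int \<Rightarrow> complex" where
  "cf P d i = (if 0 \<le> i \<and> i \<le> int d then coeff P (nat i) else 0)"

text \<open>Entry in 1-based row r (1..j) and column c (1..2j) of the block built from a.\<close>
definition sylv_entry :: "(int \<Rightarrow> complex) \<Rightarrow> int \<Rightarrow> int \<Rightarrow> int \<Rightarrow> int \<Rightarrow> int \<Rightarrow> complex" where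
  "sylv_entry a d j l r c =
     (if c < j then a (c - r)
      else if c = j then a (j - r + l)
      else a (d + (c - j) - r))"

text \<open>The 2j x 2j matrix Sylv_{j,l} (0-based Isabelle indices, translated to 1-based).\<close>
definition Sylv :: "complex poly \<Rightarrow> complex poly \<Rightarrow> nat \<Rightarrow> nat \<Rightarrow> nat \<Rightarrow> complex mat" where
  "Sylv A B d j l = mat (2*j) (2*j) (\<lambda>(r, c).
     (let r' = int r + 1; c' = int c + 1 in
      if r' \<le> int j then sylv_entry (cf A d) (int d) (int j) (int l) r' c'
      else sylv_entry (cf B d) (int d) (int j) (int l) (r' - int j) c'))"

definition symsubres :: "complex poly \<Rightarrow> complex poly \<Rightarrow> int \<Rightarrow> complex poly" where
  "symsubres A B j =
     (if j = -1 then A else if j = 0 then B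
      else (\<Sum>l = 0..degree A - nat j.
              monom (det (Sylv A B (degree A) (nat j) l)) l))"

definition defective :: "complex poly \<Rightarrow> complex poly \<Rightarrow> nat \<Rightarrow> nat \<Rightarrow> nat \<Rightarrow> bool" where
  "defective A B j \<alpha> \<beta> \<longleftrightarrow>
     (let d = degree A; Sj = symsubres A B (int j); S1 = symsubres A B (int j + 1) in
      val Sj = 0 \<and> degree Sj = d - j \<and> S1 \<noteq> 0 \<and> val S1 = \<alpha> \<and> degree S1 = d - j - \<beta>)"

definition sdiv_rel :: "complex poly \<Rightarrow> complex poly \<Rightarrow> complex poly \<Rightarrow> complex poly \<Rightarrow> bool" where
  "sdiv_rel P P1 Q R \<longleftrightarrow>
     (let n = degree P; \<alpha> = val P1; \<beta> = degree P - degree P1 in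
      degree Q = \<alpha> + \<beta> \<and> (R = 0 \<or> degree R < n - \<alpha> - \<beta>) \<and>
      P = Q * (P1 div [:0, 1:] ^ \<alpha>) + [:0, 1:] ^ \<beta> * R)"

definition squo :: "complex poly \<Rightarrow> complex poly \<Rightarrow> complex poly" where
  "squo P P1 = fst (THE (Q, R). sdiv_rel P P1 Q R)"

definition srem :: "complex poly \<Rightarrow> complex poly \<Rightarrow> complex poly" where
  "srem P P1 = snd (THE (Q, R). sdiv_rel P P1 Q R)"

end

(*
  Let U_i, V_i be the polynomials of degree < i whose coefficients are the cofactors of the
  distinguished column i - 1 of Sylv_{i,l} (they do not depend on l).  Expanding along that
  column gives U_i A + V_i B = X^(i-1) S_i, and U_i, V_i have coefficients in D.  By Cramer's
  rule, any pair (U, V) of degree < i such that U A + V B vanishes at the exponents of all other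
  columns of Sylv_{i,l} is proportional to (U_i, V_i); the top coefficient of V_i is
  +-lc(A) S_{i-1}(0).

  Write S_{j+1} = X^alpha T, c = lc(S_{j+1}) S_k(0), and let Q, R be the symmetric quotient and
  remainder of c S_j by S_{j+1}, so that c S_j = Q T + X^beta R.  The pair
  U = c X^(alpha+1) U_j - Q U_{j+1}, V = c X^(alpha+1) V_j - Q V_{j+1} has degree <= k and
  satisfies U A + V B = X^k R, hence is proportional to (U_{k+1}, V_{k+1}).  Since
  U_j V_{j+1} - V_j U_{j+1} = delta X^(j-1), where delta lc(A) is lc(S_j) times the coefficient
  of X^j in V_{j+1}, all scalars cancel and X^(j-1) Q = +-(U_j V_{k+1} - V_j U_{k+1}), which
  lies in D[X]; then so does X^beta R = c S_j - Q T.  The cancellation needs S_k(0) <> 0, which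
  follows from the same elimination applied to a left kernel vector of Sylv_{k,0}.
*)

theory Submission
  imports Defs
begin

section \<open>Determinants\<close>

lemma cofactor_cong:
  assumes "M \<in> carrier_mat n n" and "M' \<in> carrier_mat n n"
    and "\<And>r c. r < n \<Longrightarrow> c < n \<Longrightarrow> c \<noteq> q \<Longrightarrow> M $$ (r, c) = M' $$ (r, c)"
  shows "cofactor M r q = cofactor M' r q"
proof -
  have "mat_delete M r q = mat_delete M' r q"
    unfolding mat_delete_def using assms by (intro eq_matI) auto
  thus ?thesis unfolding cofactor_def by simp
qed

lemma det_replace_col:
  assumes M: "M \<in> carrier_mat n n" and q: "q < n"
  shows "det (mat n n (\<lambda>(r, c). if c = q then w r else M $$ (r, c)))
       = (\<Sum>r<n. w r * cofactor M r q)"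
proof -
  let ?N = "mat n n (\<lambda>(r, c). if c = q then w r else M $$ (r, c))"
  have "cofactor ?N r q = cofactor M r q" for r
    by (rule cofactor_cong[OF _ M]) auto
  thus ?thesis
    using laplace_expansion_column[of ?N n q] q by simp
qed

lemma det_eq_single_entry_col:
  assumes M: "M \<in> carrier_mat n n" and "p < n" and q: "q < n"
    and zero: "\<And>r. r < n \<Longrightarrow> r \<noteq> p \<Longrightarrow> M $$ (r, q) = 0"
  shows "det M = M $$ (p, q) * cofactor M p q"
proof -
  have "(\<Sum>r<n. M $$ (r, q) * cofactor M r q) = (\<Sum>r\<in>{p}. M $$ (r, q) * cofactor M r q)"
    using assms by (intro sum.mono_neutral_right) auto
  thus ?thesis using laplace_expansion_column[OF M q] by simp
qed

lemma det_mult_left_annihilator: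
  assumes M: "M \<in> carrier_mat n n" and q: "q < n" and r': "r' < n"
    and y: "\<And>c. c < n \<Longrightarrow> c \<noteq> q \<Longrightarrow> (\<Sum>r<n. y r * M $$ (r, c)) = 0"
  shows "det M * y r' = (\<Sum>r<n. y r * M $$ (r, q)) * cofactor M r' q"
proof -
  have row: "(\<Sum>c<n. M $$ (r, c) * cofactor M r' c) = (if r = r' then det M else 0)"
    if "r < n" for r
  proof -
    have "(M * adj_mat M) $$ (r, r') = (\<Sum>c<n. M $$ (r, c) * cofactor M r' c)"
      using M that r' unfolding adj_mat_def
      by (auto simp: scalar_prod_def atLeast0LessThan intro!: sum.cong)
    thus ?thesis using adj_mat[OF M] that r' by (cases "r = r'") auto
  qed
  have "det M * y r' = (\<Sum>r<n. y r * (if r = r' then det M else 0))"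
    using r' by (simp add: if_distrib sum.delta' mult.commute cong: if_cong)
  also have "\<dots> = (\<Sum>r<n. y r * (\<Sum>c<n. M $$ (r, c) * cofactor M r' c))"
    by (simp add: row)
  also have "\<dots> = (\<Sum>c<n. (\<Sum>r<n. y r * M $$ (r, c)) * cofactor M r' c)"
    unfolding sum_distrib_left sum_distrib_right mult.assoc by (rule sum.swap)
  also have "\<dots> = (\<Sum>c<n. if c = q then (\<Sum>r<n. y r * M $$ (r, q)) * cofactor M r' q else 0)"
    by (intro sum.cong refl) (auto simp: y)
  also have "\<dots> = (\<Sum>r<n. y r * M $$ (r, q)) * cofactor M r' q"
    using q by simp
  finally show ?thesis .
qed

lemma det_0_left_kernel:
  fixes M :: "'a :: field mat"
  assumes M: "M \<in> carrier_mat n n" and "det M = 0"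
  obtains y where "\<exists>r<n. y r \<noteq> 0" and "\<And>c. c < n \<Longrightarrow> (\<Sum>r<n. y r * M $$ (r, c)) = 0"
proof -
  have "det (transpose_mat M) = 0" using assms det_transpose[OF M] by simp
  then obtain v where v: "v \<in> carrier_vec n" "v \<noteq> 0\<^sub>v n" "transpose_mat M *\<^sub>v v = 0\<^sub>v n"
    using det_0_iff_vec_prod_zero[of "transpose_mat M"] M by auto
  have "\<exists>r<n. v $ r \<noteq> 0"
    using v(1,2) by (metis eq_vecI index_zero_vec(1,2) carrier_vecD)
  moreover have "(\<Sum>r<n. v $ r * M $$ (r, c)) = 0" if "c < n" for c
  proof -
    have "(transpose_mat M *\<^sub>v v) $ c = (\<Sum>r<n. v $ r * M $$ (r, c))"
      using M that v(1) by (auto simp: scalar_prod_def atLeast0LessThan mult.commute intro!: sum.cong)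
    thus ?thesis using v(3) that by simp
  qed
  ultimately show thesis using that by blast
qed

section \<open>Polynomials over a subring\<close>

lemma subring_C_sum: "subring_C D \<Longrightarrow> (\<And>x. x \<in> S \<Longrightarrow> f x \<in> D) \<Longrightarrow> sum f S \<in> D"
  unfolding subring_C_def by (induction S rule: infinite_finite_induct) auto

lemma subring_C_prod: "subring_C D \<Longrightarrow> (\<And>x. x \<in> S \<Longrightarrow> f x \<in> D) \<Longrightarrow> prod f S \<in> D"
  unfolding subring_C_def by (induction S rule: infinite_finite_induct) auto

lemma subring_C_neg_one_power:
  assumes "subring_C D"
  shows "(-1) ^ n \<in> D"
proof -
  have "-1 \<in> D" using assms unfolding subring_C_def by (metis diff_0)
  thus ?thesis using assms unfolding subring_C_def by (induction n) auto
qed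

lemma subring_C_det:
  assumes D: "subring_C D" and M: "M \<in> carrier_mat n n"
    and entries: "\<And>r c. r < n \<Longrightarrow> c < n \<Longrightarrow> M $$ (r, c) \<in> D"
  shows "det M \<in> D"
  unfolding det_def'[OF M]
proof (intro subring_C_sum[OF D])
  fix p assume "p \<in> {p. p permutes {0..<n}}"
  hence "p i < n" if "i < n" for i
    using that permutes_in_image by fastforce
  hence "(\<Prod>i = 0..<n. M $$ (i, p i)) \<in> D"
    by (intro subring_C_prod[OF D]) (auto intro: entries)
  moreover have "of_int (sign p) \<in> D"
    using subring_C_neg_one_power[OF D, of 1] D unfolding sign_def subring_C_def by auto
  ultimately show "of_int (sign p) * (\<Prod>i = 0..<n. M $$ (i, p i)) \<in> D"
    using D unfolding subring_C_def by blast
qed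

lemma subring_C_cofactor:
  assumes D: "subring_C D" and M: "M \<in> carrier_mat n n"
    and entries: "\<And>r c. r < n \<Longrightarrow> c < n \<Longrightarrow> M $$ (r, c) \<in> D"
    and "r < n" and "q < n"
  shows "cofactor M r q \<in> D"
proof -
  have "det (mat_delete M r q) \<in> D"
    using assms by (intro subring_C_det[OF D mat_delete_carrier[OF M]])
      (auto simp: mat_delete_def intro!: entries)
  thus ?thesis
    using subring_C_neg_one_power[OF D] D unfolding cofactor_def subring_C_def by blast
qed

lemma in_Dpoly_0: "subring_C D \<Longrightarrow> in_Dpoly D 0"
  unfolding in_Dpoly_def subring_C_def by simp

lemma in_Dpoly_diff: "subring_C D \<Longrightarrow> in_Dpoly D p \<Longrightarrow> in_Dpoly D q \<Longrightarrow> in_Dpoly D (p - q)"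
  unfolding in_Dpoly_def subring_C_def by simp

lemma in_Dpoly_smult: "subring_C D \<Longrightarrow> c \<in> D \<Longrightarrow> in_Dpoly D p \<Longrightarrow> in_Dpoly D (smult c p)"
  unfolding in_Dpoly_def subring_C_def by simp

lemma in_Dpoly_mult: "subring_C D \<Longrightarrow> in_Dpoly D p \<Longrightarrow> in_Dpoly D q \<Longrightarrow> in_Dpoly D (p * q)"
  unfolding in_Dpoly_def coeff_mult by (auto intro!: subring_C_sum simp: subring_C_def)

lemma in_Dpoly_monom: "subring_C D \<Longrightarrow> c \<in> D \<Longrightarrow> in_Dpoly D (monom c n)"
  unfolding in_Dpoly_def subring_C_def by (simp add: coeff_monom)

lemma in_Dpoly_monom_1_mult_iff: "0 \<in> D \<Longrightarrow> in_Dpoly D (monom 1 n * p) \<longleftrightarrow> in_Dpoly D p"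
  by (auto simp: in_Dpoly_def coeff_monom_mult)

lemma degree_mult_le_bounds: "degree p \<le> a \<Longrightarrow> degree q \<le> b \<Longrightarrow> degree (p * q) \<le> a + b"
  using degree_mult_le[of p q] by linarith

lemma degree_monom_1_mult:
  fixes p :: "'a :: idom poly"
  shows "p \<noteq> 0 \<Longrightarrow> degree (monom 1 n * p) = n + degree p"
  using degree_mult_eq[of "monom 1 n" p] by (simp add: degree_monom_eq)

lemma coeff_mult_degree_bounds:
  assumes "degree p \<le> a" and "degree q \<le> b"
  shows "coeff (p * q) (a + b) = coeff p a * coeff q b"
proof (cases "degree p = a \<and> degree q = b")
  case True
  thus ?thesis using coeff_mult_degree_sum by metis
next
  case False
  hence "coeff p a * coeff q b = 0" and "degree (p * q) < a + b"
    using assms degree_mult_le[of p q] by (auto simp: coeff_eq_0)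
  thus ?thesis by (simp add: coeff_eq_0)
qed

lemma monom_1_dvd_monom_1: "b \<le> a \<Longrightarrow> monom 1 b dvd (monom 1 a :: 'a :: comm_semiring_1 poly)"
  by (metis le_add_diff_inverse mult_monom mult_1 dvd_triv_left)

lemma monom_1_add_dvd_monom_1_mult_iff:
  "monom 1 (a + b) dvd monom 1 a * p \<longleftrightarrow> monom 1 b dvd (p :: 'a :: idom poly)"
  using mult_monom[of "1 :: 'a" a 1 b] by (metis dvd_mult_cancel_left monom_eq_0_iff one_neq_zero mult_1)

lemma monom_1_dvd_mult_cancel:
  fixes p q :: "'a :: field poly"
  assumes "monom 1 n dvd p * q" and "coeff q 0 \<noteq> 0"
  shows "monom 1 n dvd p"
proof (cases "p = 0")
  case False
  have "q \<noteq> 0" and "order 0 q = 0"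
    using assms(2) by (auto simp: order_0I poly_0_coeff_0)
  thus ?thesis using assms(1) False by (simp add: monom_1_dvd_iff order_mult)
qed simp

lemma monom_1_dvd_degree_less:
  fixes p :: "'a :: field poly"
  assumes "monom 1 n dvd p" and "degree p < n"
  shows "p = 0"
  using assms monom_1_dvd_iff' leading_coeff_0_iff by blast

lemma eq_monom_if_monom_1_dvd:
  assumes "monom 1 n dvd p" and "degree p \<le> n"
  shows "p = monom (coeff p n) n"
proof (rule poly_eqI)
  fix t
  show "coeff p t = coeff (monom (coeff p n) n) t"
    using assms by (cases t n rule: linorder_cases) (auto simp: monom_1_dvd_iff' coeff_eq_0)
qed

section \<open>Symmetric division\<close>

lemma exists_mult_congruent_mod_monom:
  fixes P T :: "'a :: field poly"
  assumes T0: "coeff T 0 \<noteq> 0"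
  shows "\<exists>Q. monom 1 n dvd P - Q * T"
proof (induction n)
  case (Suc n)
  then obtain Q where Q: "monom 1 n dvd P - Q * T" by blast
  define e where "e = coeff (P - Q * T) n / coeff T 0"
  have eq: "P - (Q + monom e n) * T = (P - Q * T) - monom e n * T"
    by (simp add: algebra_simps)
  have "coeff ((P - Q * T) - monom e n * T) i = 0" if "i < Suc n" for i
    using Q that T0 unfolding monom_1_dvd_iff' e_def
    by (cases "i < n") (auto simp: coeff_monom_mult less_Suc_eq)
  hence "monom 1 (Suc n) dvd P - (Q + monom e n) * T"
    unfolding monom_1_dvd_iff' eq by blast
  thus ?case by blast
qed simp

lemma sdiv_exists:
  fixes P T :: "'a :: field poly"
  assumes T0: "coeff T 0 \<noteq> 0"
  obtains Q R where "R = 0 \<or> degree R < degree T" and "P = Q * T + monom 1 b * R"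
proof -
  obtain Q1 H where H: "P - Q1 * T = monom 1 b * H"
    using exists_mult_congruent_mod_monom[OF T0, of b P] by (auto elim: dvdE)
  define G R where "G = H div T" and "R = H mod T"
  have "T \<noteq> 0" using T0 by auto
  show thesis
  proof (rule that)
    show "R = 0 \<or> degree R < degree T"
      unfolding R_def using degree_mod_less[OF \<open>T \<noteq> 0\<close>] by blast
    have "P = Q1 * T + monom 1 b * (G * T + R)"
      unfolding G_def R_def by (metis H div_mult_mod_eq diff_add_cancel add.commute)
    thus "P = (Q1 + monom 1 b * G) * T + monom 1 b * R"
      by (simp add: algebra_simps)
  qed
qed

lemma sdiv_degree:
  fixes P Q R T :: "'a :: field poly"
  assumes P: "P \<noteq> 0" and T: "T \<noteq> 0" and dP: "degree P = degree T + a + b"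
    and R: "R = 0 \<or> degree R < degree T" and PQR: "P = Q * T + monom 1 b * R"
  shows "degree Q = a + b"
proof -
  have QT: "Q * T = P + - (monom 1 b * R)" using PQR by simp
  have "Q * T \<noteq> 0 \<and> degree (Q * T) = degree P"
  proof (cases "R = 0")
    case False
    hence "degree (- (monom 1 b * R)) < degree P"
      using dP R by (simp add: degree_mult_eq degree_monom_eq)
    thus ?thesis unfolding QT using degree_add_eq_left by fastforce
  qed (use P QT in simp)
  hence "degree Q + degree T = degree P" by (auto simp: degree_mult_eq)
  thus ?thesis using dP by simp
qed

lemma sdiv_unique:
  fixes Q R Q' R' T :: "'a :: field poly"
  assumes T0: "coeff T 0 \<noteq> 0"
    and R: "R = 0 \<or> degree R < degree T" and R': "R' = 0 \<or> degree R' < degree T"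
    and eq: "Q * T + monom 1 b * R = Q' * T + monom 1 b * R'"
  shows "Q = Q'" and "R = R'"
proof -
  have eq': "(Q - Q') * T = monom 1 b * (R' - R)" using eq by (simp add: algebra_simps)
  hence "monom 1 b dvd Q - Q'" using monom_1_dvd_mult_cancel T0 by (metis dvd_triv_left)
  then obtain G where G: "Q - Q' = monom 1 b * G" by (elim dvdE)
  hence GT: "G * T = R' - R" using eq' by (simp add: mult.assoc monom_eq_0_iff)
  have "G = 0"
  proof (rule ccontr)
    assume "G \<noteq> 0"
    moreover have "T \<noteq> 0" using T0 by auto
    ultimately have "degree T \<le> degree (R' - R)" and "R' - R \<noteq> 0"
      using GT degree_mult_eq[of G T] by auto
    moreover have "degree (R' - R) \<le> max (degree R') (degree R)" by (rule degree_diff_le_max)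
    ultimately show False using R R' by auto
  qed
  thus "Q = Q'" and "R = R'" using G GT by auto
qed

lemma sdiv_rel_squo_srem:
  assumes "\<exists>!QR. sdiv_rel P P1 (fst QR) (snd QR)"
  shows "sdiv_rel P P1 (squo P P1) (srem P P1)"
proof -
  have "(THE (Q, R). sdiv_rel P P1 Q R) = (THE QR. sdiv_rel P P1 (fst QR) (snd QR))"
    by (simp add: case_prod_beta')
  thus ?thesis using theI'[OF assms] unfolding squo_def srem_def by simp
qed

lemma sdiv_rel_monom_mult_iff:
  fixes P T :: "complex poly"
  assumes T0: "coeff T 0 \<noteq> 0" and dP: "degree P = degree T + a + b"
  shows "sdiv_rel P (monom 1 a * T) Q R \<longleftrightarrow>
     degree Q = a + b \<and> (R = 0 \<or> degree R < degree T) \<and> P = Q * T + monom 1 b * R"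
proof -
  have T: "T \<noteq> 0" using T0 by auto
  have "val (monom 1 a * T) = a"
    unfolding val_def using T T0 by (subst order_mult) (auto simp: poly_0_coeff_0 intro!: order_0I)
  moreover have "degree (monom 1 a * T) = a + degree T"
    using T by (simp add: degree_mult_eq degree_monom_eq)
  moreover have "[:0, 1:] ^ n = (monom 1 n :: complex poly)" for n
    by (simp add: monom_altdef)
  ultimately show ?thesis unfolding sdiv_rel_def Let_def using dP by auto
qed

lemma squo_srem_monom_mult:
  fixes P T :: "complex poly"
  assumes P: "P \<noteq> 0" and T0: "coeff T 0 \<noteq> 0" and dP: "degree P = degree T + a + b"
  shows "degree (squo P (monom 1 a * T)) = a + b"
    and "srem P (monom 1 a * T) = 0 \<or> degree (srem P (monom 1 a * T)) < degree T"
    and "P = squo P (monom 1 a * T) * T + monom 1 b * srem P (monom 1 a * T)"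
proof -
  have T: "T \<noteq> 0" using T0 by auto
  obtain Q R where R: "R = 0 \<or> degree R < degree T" and PQR: "P = Q * T + monom 1 b * R"
    using sdiv_exists[OF T0] by metis
  have "\<exists>!QR. sdiv_rel P (monom 1 a * T) (fst QR) (snd QR)"
    unfolding sdiv_rel_monom_mult_iff[OF T0 dP]
  proof (rule ex1I[of _ "(Q, R)"])
    show "degree (fst (Q, R)) = a + b \<and> (snd (Q, R) = 0 \<or> degree (snd (Q, R)) < degree T)
        \<and> P = fst (Q, R) * T + monom 1 b * snd (Q, R)"
      using sdiv_degree[OF P T dP R PQR] R PQR by simp
    fix QR' :: "complex poly \<times> complex poly"
    assume "degree (fst QR') = a + b \<and> (snd QR' = 0 \<or> degree (snd QR') < degree T)
        \<and> P = fst QR' * T + monom 1 b * snd QR'"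
    hence "snd QR' = 0 \<or> degree (snd QR') < degree T"
      and "Q * T + monom 1 b * R = fst QR' * T + monom 1 b * snd QR'"
      using PQR by auto
    from sdiv_unique[OF T0 R this] show "QR' = (Q, R)" by (simp add: prod_eq_iff)
  qed
  from sdiv_rel_squo_srem[OF this] show "degree (squo P (monom 1 a * T)) = a + b"
    and "srem P (monom 1 a * T) = 0 \<or> degree (srem P (monom 1 a * T)) < degree T"
    and "P = squo P (monom 1 a * T) * T + monom 1 b * srem P (monom 1 a * T)"
    unfolding sdiv_rel_monom_mult_iff[OF T0 dP] by auto
qed

lemma squo_srem_0:
  assumes "P1 \<noteq> 0" and "val P1 = 0"
  shows "squo 0 P1 = 0" and "srem 0 P1 = 0"
proof -
  have iff: "sdiv_rel 0 P1 Q R \<longleftrightarrow> Q = 0 \<and> R = 0" for Q R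
    unfolding sdiv_rel_def Let_def using assms by auto
  have "\<exists>!QR. sdiv_rel 0 P1 (fst QR) (snd QR)"
    unfolding iff by (rule ex1I[of _ "(0, 0)"]) (auto simp: prod_eq_iff)
  from sdiv_rel_squo_srem[OF this] show "squo 0 P1 = 0" and "srem 0 P1 = 0"
    unfolding iff by auto
qed

section \<open>Sylvester matrices as coefficient matrices\<close>

definition coeff_mat :: "(nat \<Rightarrow> 'a :: zero poly) \<Rightarrow> (nat \<Rightarrow> nat) \<Rightarrow> nat \<Rightarrow> 'a mat" where
  "coeff_mat ps cs n = mat n n (\<lambda>(r, c). coeff (ps r) (cs c))"

lemma coeff_mat_carrier [simp]: "coeff_mat ps cs n \<in> carrier_mat n n"
  unfolding coeff_mat_def by simp

lemma dim_coeff_mat [simp]: "dim_row (coeff_mat ps cs n) = n" "dim_col (coeff_mat ps cs n) = n"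
  unfolding coeff_mat_def by simp_all

lemma index_coeff_mat [simp]: "r < n \<Longrightarrow> c < n \<Longrightarrow> coeff_mat ps cs n $$ (r, c) = coeff (ps r) (cs c)"
  unfolding coeff_mat_def by simp

lemma coeff_mat_cong:
  "(\<And>r. r < n \<Longrightarrow> ps r = ps' r) \<Longrightarrow> (\<And>c. c < n \<Longrightarrow> cs c = cs' c) \<Longrightarrow>
    coeff_mat ps cs n = coeff_mat ps' cs' n"
  by (intro eq_matI) (auto simp: coeff_mat_def)

lemma mat_delete_coeff_mat:
  "mat_delete (coeff_mat ps cs (Suc n)) p q =
     coeff_mat (\<lambda>r. ps (if r < p then r else Suc r)) (\<lambda>c. cs (if c < q then c else Suc c)) n"
  unfolding mat_delete_def coeff_mat_def by (intro eq_matI) auto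

lemma det_coeff_mat_repeated_col:
  assumes "c1 < n" and "c2 < n" and "c1 \<noteq> c2" and "cs c1 = cs c2"
  shows "det (coeff_mat ps cs n) = 0"
  using assms by (intro det_identical_columns[OF coeff_mat_carrier, of c1 c2])
    (auto intro!: eq_vecI simp: coeff_mat_def)

definition sylv_row :: "'a :: comm_semiring_1 poly \<Rightarrow> 'a poly \<Rightarrow> nat \<Rightarrow> nat \<Rightarrow> 'a poly" where
  "sylv_row A B i r = (if r < i then monom 1 r * A else monom 1 (r - i) * B)"

(* The columns of Sylv_{i,l} read the exponents 0, ..., i - 2, then q = i - 1 + l,
   then d, ..., d + i - 1. *)
definition sylv_col :: "nat \<Rightarrow> nat \<Rightarrow> nat \<Rightarrow> nat \<Rightarrow> nat" where
  "sylv_col d i q c = (if c < i - 1 then c else if c = i - 1 then q else d + (c - i))"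

lemma cf_eq_coeff_monom_mult:
  assumes "degree P \<le> d"
  shows "cf P d (int a - int b) = coeff (monom 1 b * P) a"
  using assms by (auto simp: cf_def coeff_monom_mult nat_diff_distrib' coeff_eq_0)

lemma sylv_entry_eq_coeff:
  assumes "degree P \<le> d" and "1 \<le> i"
  shows "sylv_entry (cf P d) (int d) (int i) (int l) (int r + 1) (int c + 1)
       = coeff (monom 1 r * P) (sylv_col d i (i - 1 + l) c)"
proof -
  have "sylv_entry (cf P d) (int d) (int i) (int l) (int r + 1) (int c + 1)
      = cf P d (int (sylv_col d i (i - 1 + l) c) - int r)"
    using assms(2) unfolding sylv_entry_def sylv_col_def
    by (auto simp: of_nat_diff intro!: arg_cong[where f = "cf P d"])
  thus ?thesis using cf_eq_coeff_monom_mult[OF assms(1)] by simp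
qed

lemma Sylv_eq_coeff_mat:
  assumes "degree A \<le> d" and "degree B \<le> d" and "1 \<le> i"
  shows "Sylv A B d i l = coeff_mat (sylv_row A B i) (sylv_col d i (i - 1 + l)) (2 * i)"
proof (rule eq_matI)
  fix r c assume "r < dim_row (coeff_mat (sylv_row A B i) (sylv_col d i (i - 1 + l)) (2 * i))"
    and "c < dim_col (coeff_mat (sylv_row A B i) (sylv_col d i (i - 1 + l)) (2 * i))"
  hence rc: "r < 2 * i" "c < 2 * i" by (simp_all add: coeff_mat_def)
  show "Sylv A B d i l $$ (r, c) =
      coeff_mat (sylv_row A B i) (sylv_col d i (i - 1 + l)) (2 * i) $$ (r, c)"
  proof (cases "r < i")
    case False
    have "Sylv A B d i l $$ (r, c)
        = sylv_entry (cf B d) (int d) (int i) (int l) (int r + 1 - int i) (int c + 1)"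
      using False rc by (simp add: Sylv_def Let_def)
    also have "int r + 1 - int i = int (r - i) + 1" using False by simp
    also have "sylv_entry (cf B d) (int d) (int i) (int l) (int (r - i) + 1) (int c + 1)
        = coeff (monom 1 (r - i) * B) (sylv_col d i (i - 1 + l) c)"
      using assms by (intro sylv_entry_eq_coeff) auto
    finally show ?thesis using False rc by (simp add: sylv_row_def)
  next
    case True
    have "Sylv A B d i l $$ (r, c)
        = sylv_entry (cf A d) (int d) (int i) (int l) (int r + 1) (int c + 1)"
      using True rc by (simp add: Sylv_def Let_def)
    also have "\<dots> = coeff (monom 1 r * A) (sylv_col d i (i - 1 + l) c)"
      using assms by (intro sylv_entry_eq_coeff) auto
    finally show ?thesis using True rc by (simp add: sylv_row_def)
  qed
qed (simp_all add: Sylv_def coeff_mat_def)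

lemma sylv_row_in_Dpoly:
  "subring_C D \<Longrightarrow> in_Dpoly D A \<Longrightarrow> in_Dpoly D B \<Longrightarrow> in_Dpoly D (sylv_row A B i r)"
  unfolding sylv_row_def by (auto intro!: in_Dpoly_mult in_Dpoly_monom simp: subring_C_def)

lemma coeff_sylv_col_eq_0:
  assumes "monom 1 (i - 1) dvd G" and "degree G < d" and "c \<noteq> i - 1"
  shows "coeff G (sylv_col d i q c) = 0"
  using assms by (auto simp: sylv_col_def monom_1_dvd_iff' coeff_eq_0)

lemma monom_1_dvd_if_sylv_cols_vanish:
  assumes "1 \<le> k" and "\<And>c. c < 2 * k \<Longrightarrow> coeff G (sylv_col d k (k - 1) c) = 0"
  shows "monom 1 k dvd G"
proof -
  have "coeff G c = 0" if "c < k" for c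
    using assms(2)[of c] that by (auto simp: sylv_col_def split: if_splits)
  thus ?thesis by (simp add: monom_1_dvd_iff')
qed

lemma degree_less_if_sylv_cols_vanish:
  assumes k: "1 \<le> k" "k \<le> d" and deg: "degree G \<le> d + (k - 1)"
    and G: "\<And>c. c < 2 * k \<Longrightarrow> coeff G (sylv_col d k (k - 1) c) = 0"
  shows "degree G < d"
proof -
  have "degree G \<le> d - 1"
  proof (rule degree_le, intro allI impI)
    fix c assume "d - 1 < c"
    show "coeff G c = 0"
    proof (cases "c < d + k")
      case True
      have "sylv_col d k (k - 1) (k + (c - d)) = c"
        using \<open>d - 1 < c\<close> k by (auto simp: sylv_col_def)
      moreover have "k + (c - d) < 2 * k" using True k(1) by linarith
      ultimately show ?thesis using G by metis
    next
      case False
      thus ?thesis using deg k(1) by (intro coeff_eq_0) linarith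
    qed
  qed
  thus ?thesis using k by simp
qed

definition trunc_poly :: "nat \<Rightarrow> (nat \<Rightarrow> 'a :: comm_monoid_add) \<Rightarrow> 'a poly" where
  "trunc_poly n y = (\<Sum>r<n. monom (y r) r)"

lemma coeff_trunc_poly: "coeff (trunc_poly n y) t = (if t < n then y t else 0)"
  unfolding trunc_poly_def by (simp add: coeff_sum coeff_monom)

lemma degree_trunc_poly: "degree (trunc_poly n y) \<le> n - 1"
  by (rule degree_le) (auto simp: coeff_trunc_poly)

lemma trunc_poly_coeff_eq:
  assumes "degree p < n" and "\<And>t. t < n \<Longrightarrow> y t = coeff p t"
  shows "trunc_poly n y = p"
  using assms by (intro poly_eqI) (auto simp: coeff_trunc_poly coeff_eq_0)

lemma coeff_sylv_comb:
  "coeff (trunc_poly i y * A + trunc_poly i (\<lambda>r. y (i + r)) * B) c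
     = (\<Sum>r<2 * i. y r * coeff (sylv_row A B i r) c)"
proof -
  have "trunc_poly i y * A + trunc_poly i (\<lambda>r. y (i + r)) * B
      = (\<Sum>r<i. smult (y r) (sylv_row A B i r)) + (\<Sum>r<i. smult (y (i + r)) (sylv_row A B i (i + r)))"
    unfolding trunc_poly_def sylv_row_def
    by (simp add: sum_distrib_right smult_monom_mult)
  also have "\<dots> = (\<Sum>r<2 * i. smult (y r) (sylv_row A B i r))"
    using sum.atLeastLessThan_concat[of 0 i "i + i" "\<lambda>r. smult (y r) (sylv_row A B i r)"]
      sum.shift_bounds_nat_ivl[of "\<lambda>r. smult (y r) (sylv_row A B i r)" 0 i i]
    by (simp add: mult_2 atLeast0LessThan add.commute)
  finally show ?thesis by (simp add: coeff_sum)
qed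

section \<open>Subresultant cofactors\<close>

locale sres =
  fixes A B :: "complex poly" and d :: nat
  assumes degree_A: "degree A = d" and degree_B: "degree B = d"
begin

abbreviation S :: "nat \<Rightarrow> complex poly" where
  "S i \<equiv> symsubres A B (int i)"

lemma Sylv_eq:
  "1 \<le> i \<Longrightarrow> Sylv A B d i l = coeff_mat (sylv_row A B i) (sylv_col d i (i - 1 + l)) (2 * i)"
  using Sylv_eq_coeff_mat degree_A degree_B by simp

lemma coeff_S:
  assumes "1 \<le> i"
  shows "coeff (S i) t = (if t \<le> d - i then det (Sylv A B d i t) else 0)"
proof -
  have "S i = (\<Sum>l = 0..d - i. monom (det (Sylv A B d i l)) l)"
    unfolding symsubres_def using assms degree_A by simp
  thus ?thesis by (simp add: coeff_sum coeff_monom)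
qed

lemma degree_S_le: "1 \<le> i \<Longrightarrow> degree (S i) \<le> d - i"
  by (rule degree_le) (simp add: coeff_S)

lemma poly_S_0: "1 \<le> i \<Longrightarrow> poly (S i) 0 = det (Sylv A B d i 0)"
  by (simp add: poly_0_coeff_0 coeff_S)

lemma poly_S_0_eq_0_above_degree:
  assumes "d < i"
  shows "poly (S i) 0 = 0"
proof -
  have "1 \<le> i" using assms by simp
  thus ?thesis unfolding poly_S_0[OF \<open>1 \<le> i\<close>] Sylv_eq[OF \<open>1 \<le> i\<close>]
    using assms by (intro det_coeff_mat_repeated_col[of d _ i]) (auto simp: sylv_col_def)
qed

lemma det_Sylv_in_D:
  assumes "subring_C D" "in_Dpoly D A" "in_Dpoly D B" and "1 \<le> i"
  shows "det (Sylv A B d i l) \<in> D"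
  unfolding Sylv_eq[OF assms(4)] using sylv_row_in_Dpoly[OF assms(1-3)]
  by (intro subring_C_det[OF assms(1) coeff_mat_carrier]) (auto simp: in_Dpoly_def)

lemma S_in_Dpoly:
  assumes "subring_C D" "in_Dpoly D A" "in_Dpoly D B" and "1 \<le> i"
  shows "in_Dpoly D (S i)"
  using det_Sylv_in_D[OF assms] assms(1)
  unfolding in_Dpoly_def coeff_S[OF assms(4)] subring_C_def by simp

(* Cofactors of column i - 1, the only column of Sylv_{i,l} that depends on l;
   cof_A i and cof_B i are the polynomials U_i and V_i. *)
definition sylv_cof :: "nat \<Rightarrow> nat \<Rightarrow> complex" where
  "sylv_cof i r = cofactor (coeff_mat (sylv_row A B i) (sylv_col d i (i - 1)) (2 * i)) r (i - 1)"

definition cof_A :: "nat \<Rightarrow> complex poly" where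
  "cof_A i = trunc_poly i (sylv_cof i)"

definition cof_B :: "nat \<Rightarrow> complex poly" where
  "cof_B i = trunc_poly i (\<lambda>r. sylv_cof i (i + r))"

lemma degree_cof_A: "degree (cof_A i) \<le> i - 1"
  unfolding cof_A_def by (rule degree_trunc_poly)

lemma degree_cof_B: "degree (cof_B i) \<le> i - 1"
  unfolding cof_B_def by (rule degree_trunc_poly)

lemma cof_in_Dpoly:
  assumes D: "subring_C D" "in_Dpoly D A" "in_Dpoly D B"
  shows "in_Dpoly D (cof_A i)" and "in_Dpoly D (cof_B i)"
proof -
  have "sylv_cof i r \<in> D" if "r < 2 * i" for r
    unfolding sylv_cof_def using that sylv_row_in_Dpoly[OF D]
    by (intro subring_C_cofactor[OF D(1) coeff_mat_carrier]) (auto simp: in_Dpoly_def)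
  thus "in_Dpoly D (cof_A i)" and "in_Dpoly D (cof_B i)"
    using D(1) unfolding cof_A_def cof_B_def in_Dpoly_def coeff_trunc_poly subring_C_def by auto
qed

lemma coeff_cof_comb:
  assumes "1 \<le> i"
  shows "coeff (cof_A i * A + cof_B i * B) c = det (coeff_mat (sylv_row A B i) (sylv_col d i c) (2 * i))"
proof -
  let ?M = "coeff_mat (sylv_row A B i) (sylv_col d i (i - 1)) (2 * i)"
  have "det (coeff_mat (sylv_row A B i) (sylv_col d i c) (2 * i))
      = det (mat (2 * i) (2 * i)
          (\<lambda>(r, c'). if c' = i - 1 then coeff (sylv_row A B i r) c else ?M $$ (r, c')))"
    by (rule arg_cong[where f = det], rule eq_matI) (auto simp: sylv_col_def)
  also have "\<dots> = (\<Sum>r<2 * i. coeff (sylv_row A B i r) c * cofactor ?M r (i - 1))"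
    by (rule det_replace_col) (use assms in auto)
  finally show ?thesis
    unfolding cof_A_def cof_B_def coeff_sylv_comb by (simp add: sylv_cof_def mult.commute)
qed

lemma cof_bezout:
  assumes i: "1 \<le> i" "i \<le> d"
  shows "cof_A i * A + cof_B i * B = monom 1 (i - 1) * S i"
proof (rule poly_eqI)
  fix c
  let ?M = "coeff_mat (sylv_row A B i) (sylv_col d i c) (2 * i)"
  have rhs: "coeff (monom 1 (i - 1) * S i) c =
     (if c < i - 1 then 0 else if c - (i - 1) \<le> d - i then det (Sylv A B d i (c - (i - 1))) else 0)"
    by (simp add: coeff_monom_mult coeff_S[OF i(1)])
  consider (low) "c < i - 1" | (mid) "i - 1 \<le> c" "c < d" | (high) "d \<le> c" "c < d + i"
    | (top) "d + i \<le> c" by linarith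
  then show "coeff (cof_A i * A + cof_B i * B) c = coeff (monom 1 (i - 1) * S i) c"
  proof cases
    case low
    have "det ?M = 0"
      using low i by (intro det_coeff_mat_repeated_col[of c _ "i - 1"]) (auto simp: sylv_col_def)
    thus ?thesis using low rhs coeff_cof_comb[OF i(1)] by simp
  next
    case mid
    thus ?thesis using rhs coeff_cof_comb[OF i(1)] Sylv_eq[OF i(1), of "c - (i - 1)"] i by simp
  next
    case high
    have "det ?M = 0"
      using high i by (intro det_coeff_mat_repeated_col[of "i + (c - d)" _ "i - 1"]) (auto simp: sylv_col_def)
    thus ?thesis using high rhs coeff_cof_comb[OF i(1)] i by simp
  next
    case top
    have "degree (cof_A i * A) \<le> (i - 1) + d" and "degree (cof_B i * B) \<le> (i - 1) + d"
      using degree_mult_le[of "cof_A i" A] degree_mult_le[of "cof_B i" B]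
        degree_cof_A[of i] degree_cof_B[of i] degree_A degree_B by linarith+
    hence "degree (cof_A i * A + cof_B i * B) < c"
      using degree_add_le top i by fastforce
    hence "coeff (cof_A i * A + cof_B i * B) c = 0" by (rule coeff_eq_0)
    moreover have "coeff (monom 1 (i - 1) * S i) c = 0" using rhs top i by simp
    ultimately show ?thesis by (simp only:)
  qed
qed

lemma coeff_sylv_row_top:
  assumes "r < 2 * i - 1"
  shows "coeff (sylv_row A B i r) (d + i - 1) = (if r = i - 1 then lead_coeff A else 0)"
proof (cases "r < i")
  case True
  thus ?thesis using degree_A
    by (auto simp: sylv_row_def coeff_monom_mult intro!: coeff_eq_0)
next
  case False
  thus ?thesis using assms degree_B
    by (auto simp: sylv_row_def coeff_monom_mult intro!: coeff_eq_0)
qed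

lemma coeff_cof_B_top:
  assumes i: "2 \<le> i"
  shows "\<exists>e. coeff (cof_B i) (i - 1) = (-1) ^ e * lead_coeff A * poly (S (i - 1)) 0"
proof -
  \<comment> \<open>Without the last row, lc A is the only nonzero entry of the column of exponent
    d + i - 1; deleting its row and column as well leaves Sylv_{i-1,0}.\<close>
  define n where "n = 2 * i - 1"
  have n: "2 * i = Suc n" "n - 1 = Suc (n - 1) - 1" "i - 1 < n" "n - 1 < n" "n = Suc (n - 1)"
    using i unfolding n_def by auto
  define N where "N = coeff_mat (sylv_row A B i)
    (\<lambda>c. sylv_col d i (i - 1) (if c < i - 1 then c else Suc c)) n"
  have "mat_delete (coeff_mat (sylv_row A B i) (sylv_col d i (i - 1)) (Suc n)) n (i - 1) = N"
    unfolding mat_delete_coeff_mat N_def by (intro coeff_mat_cong) auto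
  hence "cofactor (coeff_mat (sylv_row A B i) (sylv_col d i (i - 1)) (Suc n)) n (i - 1)
      = (-1) ^ (n + (i - 1)) * det N"
    unfolding cofactor_def by simp
  moreover have "coeff (cof_B i) (i - 1) = sylv_cof i n"
    using i unfolding cof_B_def coeff_trunc_poly n_def by (simp add: mult_2)
  ultimately have top: "coeff (cof_B i) (i - 1) = (-1) ^ (n + (i - 1)) * det N"
    unfolding sylv_cof_def n(1) by simp
  have "mat_delete N (i - 1) (n - 1)
      = coeff_mat (sylv_row A B (i - 1)) (sylv_col d (i - 1) (i - 1 - 1 + 0)) (n - 1)"
    unfolding N_def
    by (subst n(5), subst mat_delete_coeff_mat, intro coeff_mat_cong)
      (use i in \<open>auto simp: sylv_row_def sylv_col_def n_def\<close>)
  also have "\<dots> = Sylv A B d (i - 1) 0"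
    using Sylv_eq[of "i - 1" 0] i by (simp add: n_def mult_2)
  finally have cof: "cofactor N (i - 1) (n - 1) = (-1) ^ ((i - 1) + (n - 1)) * poly (S (i - 1)) 0"
    using i poly_S_0[of "i - 1"] by (simp add: cofactor_def)
  have "det N = N $$ (i - 1, n - 1) * cofactor N (i - 1) (n - 1)"
    using n coeff_sylv_row_top
    by (intro det_eq_single_entry_col) (auto simp: N_def sylv_col_def n_def)
  also have "N $$ (i - 1, n - 1) = lead_coeff A"
    using n coeff_sylv_row_top by (auto simp: N_def sylv_col_def n_def)
  finally show ?thesis unfolding top cof
    by (intro exI[of _ "n + (i - 1) + ((i - 1) + (n - 1))"]) (simp add: power_add mult_ac)
qed

lemma singular_Sylv_left_kernel:
  assumes k: "1 \<le> k" "k \<le> d" and s0: "poly (S k) 0 = 0"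
  obtains U V where "U \<noteq> 0 \<or> V \<noteq> 0" and "degree U < k" and "degree V < k"
    and "monom 1 k dvd U * A + V * B" and "degree (U * A + V * B) < d"
proof -
  let ?M = "coeff_mat (sylv_row A B k) (sylv_col d k (k - 1)) (2 * k)"
  have "det ?M = 0" using s0 poly_S_0[OF k(1)] Sylv_eq[OF k(1), of 0] by simp
  then obtain y where y: "\<exists>r<2 * k. y r \<noteq> 0"
    and ann: "\<And>c. c < 2 * k \<Longrightarrow> (\<Sum>r<2 * k. y r * ?M $$ (r, c)) = 0"
    by (rule det_0_left_kernel[OF coeff_mat_carrier]) auto
  define U V where "U = trunc_poly k y" and "V = trunc_poly k (\<lambda>r. y (k + r))"
  have G: "coeff (U * A + V * B) (sylv_col d k (k - 1) c) = 0" if "c < 2 * k" for c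
    using ann[OF that] that unfolding U_def V_def coeff_sylv_comb by simp
  show thesis
  proof
    obtain r where r: "r < 2 * k" "y r \<noteq> 0" using y by blast
    show "U \<noteq> 0 \<or> V \<noteq> 0"
    proof (cases "r < k")
      case True
      hence "coeff U r \<noteq> 0" using r unfolding U_def coeff_trunc_poly by simp
      thus ?thesis by auto
    next
      case False
      hence "coeff V (r - k) \<noteq> 0" using r unfolding V_def coeff_trunc_poly by simp
      thus ?thesis by auto
    qed
    have dUV: "degree U \<le> k - 1" "degree V \<le> k - 1"
      unfolding U_def V_def by (rule degree_trunc_poly)+
    thus "degree U < k" and "degree V < k" using k(1) by linarith+
    show "monom 1 k dvd U * A + V * B"
      using k(1) G by (rule monom_1_dvd_if_sylv_cols_vanish)
    have "degree (U * A) \<le> d + (k - 1)" and "degree (V * B) \<le> d + (k - 1)"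
      using degree_mult_le[of U A] degree_mult_le[of V B] dUV degree_A degree_B by linarith+
    hence "degree (U * A + V * B) \<le> d + (k - 1)" by (rule degree_add_le)
    thus "degree (U * A + V * B) < d"
      by (rule degree_less_if_sylv_cols_vanish[OF k _ G])
  qed
qed

lemma sylv_cof_left_annihilator:
  assumes i: "1 \<le> i" and r: "r < 2 * i"
    and ann: "\<And>c. c < 2 * i \<Longrightarrow> c \<noteq> i - 1 \<Longrightarrow>
      (\<Sum>r<2 * i. y r * coeff (sylv_row A B i r) (sylv_col d i (i - 1) c)) = 0"
  shows "sylv_cof i (2 * i - 1) * y r = y (2 * i - 1) * sylv_cof i r"
proof -
  let ?M = "coeff_mat (sylv_row A B i) (sylv_col d i (i - 1)) (2 * i)"
  \<comment> \<open>Column i - 1 replaced by the last unit vector: the cofactors along that column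
    are unchanged and the determinant becomes sylv_cof i (2 * i - 1).\<close>
  let ?M' = "mat (2 * i) (2 * i)
    (\<lambda>(r, c). if c = i - 1 then (if r = 2 * i - 1 then 1 else 0) else ?M $$ (r, c))"
  have q: "i - 1 < 2 * i" and last: "2 * i - 1 < 2 * i" using i by simp_all
  have cof: "cofactor ?M' r (i - 1) = sylv_cof i r" for r
    unfolding sylv_cof_def by (rule cofactor_cong) auto
  have "det ?M' = (\<Sum>r<2 * i. (if r = 2 * i - 1 then 1 else 0) * cofactor ?M r (i - 1))"
    by (rule det_replace_col[OF coeff_mat_carrier q])
  also have "\<dots> = (\<Sum>r<2 * i. if r = 2 * i - 1 then cofactor ?M r (i - 1) else 0)"
    by (intro sum.cong) auto
  finally have det: "det ?M' = sylv_cof i (2 * i - 1)"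
    using last unfolding sylv_cof_def by simp
  have "(\<Sum>r<2 * i. y r * ?M' $$ (r, i - 1)) = (\<Sum>r<2 * i. if r = 2 * i - 1 then y r else 0)"
    using q by (intro sum.cong) auto
  hence col: "(\<Sum>r<2 * i. y r * ?M' $$ (r, i - 1)) = y (2 * i - 1)"
    using last by simp
  have "det ?M' * y r = (\<Sum>r<2 * i. y r * ?M' $$ (r, i - 1)) * cofactor ?M' r (i - 1)"
    by (rule det_mult_left_annihilator) (use ann q r in auto)
  thus ?thesis unfolding det col cof .
qed

lemma proportional_to_cof:
  assumes i: "1 \<le> i" and dU: "degree U < i" and dV: "degree V < i"
    and dvd: "monom 1 (i - 1) dvd U * A + V * B" and deg: "degree (U * A + V * B) < d"
  shows "smult (coeff (cof_B i) (i - 1)) U = smult (coeff V (i - 1)) (cof_A i)"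
    and "smult (coeff (cof_B i) (i - 1)) V = smult (coeff V (i - 1)) (cof_B i)"
proof -
  define y where "y r = (if r < i then coeff U r else coeff V (r - i))" for r
  have "trunc_poly i y = U" and "trunc_poly i (\<lambda>r. y (i + r)) = V"
    using dU dV by (auto intro!: trunc_poly_coeff_eq simp: y_def)
  hence "(\<Sum>r<2 * i. y r * coeff (sylv_row A B i r) (sylv_col d i (i - 1) c)) = 0"
    if "c \<noteq> i - 1" for c
    using coeff_sylv_col_eq_0[OF dvd deg that] coeff_sylv_comb[symmetric] by metis
  hence ratio: "sylv_cof i (2 * i - 1) * y r = y (2 * i - 1) * sylv_cof i r" if "r < 2 * i" for r
    using sylv_cof_left_annihilator[OF i that] by blast
  have "\<not> 2 * i - 1 < i" and "i + (i - 1) = 2 * i - 1" using i by auto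
  hence top: "coeff (cof_B i) (i - 1) = sylv_cof i (2 * i - 1)" and "coeff V (i - 1) = y (2 * i - 1)"
    using i by (simp_all add: cof_B_def coeff_trunc_poly y_def)
  show "smult (coeff (cof_B i) (i - 1)) U = smult (coeff V (i - 1)) (cof_A i)"
  proof (rule poly_eqI)
    fix t
    show "coeff (smult (coeff (cof_B i) (i - 1)) U) t = coeff (smult (coeff V (i - 1)) (cof_A i)) t"
      using ratio[of t] dU unfolding top \<open>coeff V (i - 1) = y (2 * i - 1)\<close>
      by (cases "t < i") (auto simp: cof_A_def coeff_trunc_poly y_def coeff_eq_0)
  qed
  show "smult (coeff (cof_B i) (i - 1)) V = smult (coeff V (i - 1)) (cof_B i)"
  proof (rule poly_eqI)
    fix t
    show "coeff (smult (coeff (cof_B i) (i - 1)) V) t = coeff (smult (coeff V (i - 1)) (cof_B i)) t"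
      using ratio[of "i + t"] dV unfolding top \<open>coeff V (i - 1) = y (2 * i - 1)\<close>
      by (cases "t < i") (auto simp: cof_B_def coeff_trunc_poly y_def coeff_eq_0)
  qed
qed

(* With truncated subtraction, defective also admits beta > d - j: then S_{j+1} is a nonzero
   constant and S_{j+alpha+beta} lies beyond S_d. *)
lemma degenerate_defective:
  assumes "defective A B j \<alpha> \<beta>" and "d < j + \<beta>"
  shows "val (S (j + 1)) = 0" and "poly (S (j + \<alpha> + \<beta>)) 0 = 0"
proof -
  have "S (j + 1) \<noteq> 0" "val (S (j + 1)) = \<alpha>" "degree (S (j + 1)) = 0"
    using assms degree_A unfolding defective_def Let_def by (auto simp: add.commute)
  thus "val (S (j + 1)) = 0" using order_degree[of "S (j + 1)" 0] unfolding val_def by simp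
  show "poly (S (j + \<alpha> + \<beta>)) 0 = 0" using assms(2) by (intro poly_S_0_eq_0_above_degree) simp
qed

end

section \<open>Defective pairs\<close>

locale defective_sres = sres +
  fixes j \<alpha> \<beta> :: nat
  assumes A0: "coeff A 0 \<noteq> 0"
    and j: "1 \<le> j" "j < d"
    and defective: "defective A B j \<alpha> \<beta>"
    and nondegenerate: "j + \<beta> \<le> d"
begin

lemma A_nonzero: "A \<noteq> 0"
  using A0 by auto

definition k :: nat where "k = j + \<alpha> + \<beta>"

definition T :: "complex poly" where "T = S (j + 1) div monom 1 \<alpha>"

definition \<Delta> :: "complex poly" where
  "\<Delta> = cof_A j * cof_B (j + 1) - cof_B j * cof_A (j + 1)"

lemma coeff_S_j_0: "coeff (S j) 0 \<noteq> 0" and degree_S_j: "degree (S j) = d - j"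
  and S_j_nonzero: "S j \<noteq> 0"
proof -
  have "val (S j) = 0" and "degree (S j) = d - j"
    using defective degree_A unfolding defective_def Let_def by auto
  moreover from this have "S j \<noteq> 0" using j by auto
  ultimately show "coeff (S j) 0 \<noteq> 0" "degree (S j) = d - j" "S j \<noteq> 0"
    unfolding val_def by (auto simp: poly_0_coeff_0[symmetric] order_root)
qed

lemma S_Suc_j_nonzero: "S (j + 1) \<noteq> 0" and val_S_Suc_j: "val (S (j + 1)) = \<alpha>"
  and degree_S_Suc_j: "degree (S (j + 1)) = d - j - \<beta>"
  using defective degree_A unfolding defective_def Let_def by (simp_all add: add.commute)

lemma beta_pos: "1 \<le> \<beta>"
  using degree_S_Suc_j degree_S_le[of "j + 1"] j by simp

lemma k_pos: "1 \<le> k"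
  using j unfolding k_def by simp

lemma k_le_d: "k \<le> d"
proof -
  have "\<alpha> \<le> degree (S (j + 1))"
    using order_degree[OF S_Suc_j_nonzero, of 0] val_S_Suc_j unfolding val_def by simp
  thus ?thesis using degree_S_Suc_j nondegenerate unfolding k_def by simp
qed

lemma S_Suc_j_eq: "S (j + 1) = monom 1 \<alpha> * T"
  using monom_1_dvd_iff[OF S_Suc_j_nonzero] val_S_Suc_j unfolding T_def val_def by simp

lemma coeff_T_0: "coeff T 0 \<noteq> 0" and T_nonzero: "T \<noteq> 0" and degree_T: "degree T = d - k"
  and lead_coeff_T: "lead_coeff T = lead_coeff (S (j + 1))"
proof -
  have "T \<noteq> 0" using S_Suc_j_nonzero S_Suc_j_eq by auto
  have "val (S (j + 1)) = \<alpha> + order 0 T"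
    unfolding S_Suc_j_eq val_def using \<open>T \<noteq> 0\<close> by (simp add: order_mult)
  thus "coeff T 0 \<noteq> 0"
    using val_S_Suc_j \<open>T \<noteq> 0\<close> by (simp add: poly_0_coeff_0[symmetric] order_root)
  show "T \<noteq> 0" "lead_coeff T = lead_coeff (S (j + 1))"
    using \<open>T \<noteq> 0\<close> unfolding S_Suc_j_eq lead_coeff_mult by (simp_all add: degree_monom_eq)
  show "degree T = d - k"
    using degree_S_Suc_j degree_monom_1_mult[OF \<open>T \<noteq> 0\<close>, of \<alpha>] k_le_d
    unfolding S_Suc_j_eq k_def by simp
qed

lemma monom_S_Suc_j_eq: "monom 1 j * S (j + 1) = monom 1 (j + \<alpha>) * T"
  unfolding S_Suc_j_eq by (simp add: mult_monom mult.assoc[symmetric])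

lemma degree_monom_S_j: "degree (monom 1 (j - 1) * S j) = d - 1"
  using degree_monom_1_mult[OF S_j_nonzero] degree_S_j j by simp

lemma degree_monom_S_Suc_j: "degree (monom 1 j * S (j + 1)) = d - \<beta>"
  using degree_monom_1_mult[OF S_Suc_j_nonzero] degree_S_Suc_j nondegenerate by simp

lemma cof_bezout_j: "cof_A j * A + cof_B j * B = monom 1 (j - 1) * S j"
  and cof_bezout_Suc_j: "cof_A (j + 1) * A + cof_B (j + 1) * B = monom 1 j * S (j + 1)"
  using cof_bezout[of j] cof_bezout[of "j + 1"] j by simp_all

lemma \<Delta>_mult_A: "\<Delta> * A = monom 1 (j - 1) * S j * cof_B (j + 1) - monom 1 j * S (j + 1) * cof_B j"
  unfolding \<Delta>_def cof_bezout_j[symmetric] cof_bezout_Suc_j[symmetric] by (simp add: algebra_simps)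

lemma \<Delta>_eq_monom: "\<Delta> = monom (coeff \<Delta> (j - 1)) (j - 1)"
proof (rule eq_monom_if_monom_1_dvd)
  have "monom 1 (j - 1) dvd \<Delta> * A"
    unfolding \<Delta>_mult_A using j
    by (intro dvd_diff dvd_mult2) (auto simp: monom_1_dvd_iff' coeff_monom_mult)
  thus "monom 1 (j - 1) dvd \<Delta>" using A0 by (rule monom_1_dvd_mult_cancel)
  show "degree \<Delta> \<le> j - 1"
  proof (cases "\<Delta> = 0")
    case False
    have "degree (monom 1 (j - 1) * S j * cof_B (j + 1)) \<le> (d - 1) + j"
      using degree_monom_S_j degree_cof_B[of "j + 1"] by (intro degree_mult_le_bounds) auto
    moreover have "degree (monom 1 j * S (j + 1) * cof_B j) \<le> (d - \<beta>) + (j - 1)"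
      using degree_monom_S_Suc_j degree_cof_B[of j] by (intro degree_mult_le_bounds) auto
    ultimately have "degree (\<Delta> * A) \<le> (d - 1) + j"
      using beta_pos j
      unfolding \<Delta>_mult_A by (intro degree_diff_le) auto
    thus ?thesis using False degree_A j A_nonzero by (auto simp: degree_mult_eq)
  qed simp
qed

lemma degree_\<Delta>_le: "degree \<Delta> \<le> j - 1"
  by (subst \<Delta>_eq_monom) (rule degree_monom_le)

lemma coeff_\<Delta>_mult_lead_coeff_A:
  "coeff \<Delta> (j - 1) * lead_coeff A = lead_coeff (S j) * coeff (cof_B (j + 1)) j"
proof -
  have "coeff \<Delta> (j - 1) * lead_coeff A = coeff (\<Delta> * A) ((j - 1) + d)"
    using coeff_mult_degree_bounds[OF degree_\<Delta>_le, of A d] degree_A by simp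
  also have "(j - 1) + d = (d - 1) + j" using j by simp
  also have "coeff (\<Delta> * A) ((d - 1) + j)
      = coeff (monom 1 (j - 1) * S j * cof_B (j + 1)) ((d - 1) + j)
        - coeff (monom 1 j * S (j + 1) * cof_B j) ((d - 1) + j)"
    unfolding \<Delta>_mult_A coeff_diff ..
  also have "coeff (monom 1 (j - 1) * S j * cof_B (j + 1)) ((d - 1) + j)
      = lead_coeff (S j) * coeff (cof_B (j + 1)) j"
    using coeff_mult_degree_bounds[OF _ degree_cof_B, of "monom 1 (j - 1) * S j" "d - 1" "j + 1"]
      degree_monom_S_j j by (simp add: degree_S_j coeff_monom_mult)
  also have "coeff (monom 1 j * S (j + 1) * cof_B j) ((d - 1) + j) = 0"
    using degree_mult_le_bounds[OF _ degree_cof_B, of "monom 1 j * S (j + 1)" "d - \<beta>" j]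
      degree_monom_S_Suc_j beta_pos j by (intro coeff_eq_0) simp
  finally show ?thesis by simp
qed

lemma coeff_\<Delta>_nonzero: "coeff \<Delta> (j - 1) \<noteq> 0"
proof -
  obtain e where "coeff (cof_B (j + 1)) j = (-1) ^ e * lead_coeff A * poly (S j) 0"
    using coeff_cof_B_top[of "j + 1"] j by auto
  moreover have "lead_coeff (S j) \<noteq> 0" using S_j_nonzero by simp
  ultimately have "lead_coeff (S j) * coeff (cof_B (j + 1)) j \<noteq> 0"
    using coeff_S_j_0 A_nonzero by (simp add: poly_0_coeff_0)
  thus ?thesis using coeff_\<Delta>_mult_lead_coeff_A by auto
qed

lemma \<Delta>_nonzero: "\<Delta> \<noteq> 0"
  using coeff_\<Delta>_nonzero by auto

lemma kernel_first_combination_eq_0: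
  assumes dU: "degree U < k" and dV: "degree V < k"
    and dvd: "monom 1 k dvd U * A + V * B" and dG: "degree (U * A + V * B) < d"
  shows "U * cof_B (j + 1) - V * cof_A (j + 1) = 0"
proof (rule ccontr)
  let ?P = "U * cof_B (j + 1) - V * cof_A (j + 1)"
  assume P: "?P \<noteq> 0"
  have PA: "?P * A = (U * A + V * B) * cof_B (j + 1) - monom 1 (j + \<alpha>) * T * V"
    unfolding monom_S_Suc_j_eq[symmetric] cof_bezout_Suc_j[symmetric] by (simp add: algebra_simps)
  have "monom 1 (j + \<alpha>) dvd U * A + V * B"
    using dvd_trans[OF monom_1_dvd_monom_1 dvd] unfolding k_def by simp
  hence "monom 1 (j + \<alpha>) dvd ?P * A" unfolding PA by (intro dvd_diff dvd_mult2) auto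
  hence "monom 1 (j + \<alpha>) dvd ?P" using A0 by (rule monom_1_dvd_mult_cancel)
  moreover have "degree ?P < j + \<alpha>"
  proof -
    have "degree ((U * A + V * B) * cof_B (j + 1)) \<le> (d - 1) + j"
      using dG degree_cof_B[of "j + 1"] by (intro degree_mult_le_bounds) auto
    moreover have "degree (monom 1 (j + \<alpha>) * T * V) \<le> (j + \<alpha> + (d - k)) + (k - 1)"
      using degree_T dV
      by (intro degree_mult_le_bounds order.trans[OF degree_mult_le_bounds[OF degree_monom_le]]) auto
    ultimately have "degree (?P * A) \<le> d + (j + \<alpha>) - 1"
      unfolding PA using k_le_d k_pos beta_pos unfolding k_def by (intro degree_diff_le) auto
    thus ?thesis using P A_nonzero degree_A j by (simp add: degree_mult_eq)
  qed
  ultimately show False using P monom_1_dvd_degree_less by blast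
qed

lemma kernel_second_combination_eq_0:
  assumes dU: "degree U < k" and dV: "degree V < k"
    and dvd: "monom 1 k dvd U * A + V * B" and dG: "degree (U * A + V * B) < d"
  shows "cof_A j * V - cof_B j * U = 0"
proof (rule ccontr)
  let ?Q = "cof_A j * V - cof_B j * U"
  assume Q: "?Q \<noteq> 0"
  have "\<Delta> * (U * A + V * B) = (U * cof_B (j + 1) - V * cof_A (j + 1)) * (monom 1 (j - 1) * S j)
      + ?Q * (monom 1 j * S (j + 1))"
    unfolding cof_bezout_j[symmetric] cof_bezout_Suc_j[symmetric] \<Delta>_def by (simp add: algebra_simps)
  hence eq: "\<Delta> * (U * A + V * B) = monom 1 (j + \<alpha>) * (?Q * T)"
    unfolding kernel_first_combination_eq_0[OF assms] monom_S_Suc_j_eq by (simp add: mult_ac)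
  have "monom 1 (j - 1) dvd \<Delta>"
    by (subst \<Delta>_eq_monom) (simp add: monom_1_dvd_iff' coeff_monom)
  hence "monom 1 (j - 1) * monom 1 k dvd \<Delta> * (U * A + V * B)"
    using dvd by (rule mult_dvd_mono)
  hence "monom 1 ((j - 1) + k) dvd \<Delta> * (U * A + V * B)" by (simp add: mult_monom)
  moreover have "(j - 1) + k = (j + \<alpha>) + (j + \<beta> - 1)" using j unfolding k_def by simp
  ultimately have "monom 1 ((j + \<alpha>) + (j + \<beta> - 1)) dvd monom 1 (j + \<alpha>) * (?Q * T)"
    unfolding eq[symmetric] by simp
  hence "monom 1 (j + \<beta> - 1) dvd ?Q * T"
    by (simp only: monom_1_add_dvd_monom_1_mult_iff)
  hence "monom 1 (j + \<beta> - 1) dvd ?Q" using coeff_T_0 by (rule monom_1_dvd_mult_cancel)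
  moreover have "degree ?Q < j + \<beta> - 1"
  proof -
    have "degree (\<Delta> * (U * A + V * B)) \<le> (j - 1) + (d - 1)"
      using dG by (intro degree_mult_le_bounds degree_\<Delta>_le) simp
    moreover have "degree (monom 1 (j + \<alpha>) * (?Q * T)) = (j + \<alpha>) + (degree ?Q + (d - k))"
      using Q T_nonzero degree_T by (simp add: degree_monom_1_mult degree_mult_eq degree_monom_eq)
    ultimately show ?thesis
      unfolding eq using k_le_d beta_pos j unfolding k_def by linarith
  qed
  ultimately show False using Q monom_1_dvd_degree_less by blast
qed

lemma Sylv_kernel_trivial:
  assumes "degree U < k" and "degree V < k"
    and "monom 1 k dvd U * A + V * B" and "degree (U * A + V * B) < d"
  shows "U = 0" and "V = 0"
proof -
  note first = kernel_first_combination_eq_0[OF assms]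
    and second = kernel_second_combination_eq_0[OF assms]
  have "\<Delta> * U = (U * cof_B (j + 1) - V * cof_A (j + 1)) * cof_A j
      + (cof_A j * V - cof_B j * U) * cof_A (j + 1)"
    unfolding \<Delta>_def by (simp add: algebra_simps)
  also have "\<dots> = 0" unfolding first second by simp
  finally show "U = 0" using \<Delta>_nonzero by simp
  have "\<Delta> * V = (U * cof_B (j + 1) - V * cof_A (j + 1)) * cof_B j
      + (cof_A j * V - cof_B j * U) * cof_B (j + 1)"
    unfolding \<Delta>_def by (simp add: algebra_simps)
  also have "\<dots> = 0" unfolding first second by simp
  finally show "V = 0" using \<Delta>_nonzero by simp
qed

lemma poly_S_k_0_nonzero: "poly (S k) 0 \<noteq> 0"
proof
  assume "poly (S k) 0 = 0"
  then obtain U V where "U \<noteq> 0 \<or> V \<noteq> 0" and "degree U < k" and "degree V < k"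
    and "monom 1 k dvd U * A + V * B" and "degree (U * A + V * B) < d"
    using singular_Sylv_left_kernel[OF k_pos k_le_d] by metis
  thus False using Sylv_kernel_trivial by blast
qed

definition P :: "complex poly" where
  "P = smult (lead_coeff (S (j + 1)) * poly (S k) 0) (S j)"

definition Q :: "complex poly" where "Q = squo P (S (j + 1))"

definition R :: "complex poly" where "R = srem P (S (j + 1))"

lemma degree_Q: "degree Q = \<alpha> + \<beta>" and degree_R: "R = 0 \<or> degree R < d - k"
  and P_eq: "P = Q * T + monom 1 \<beta> * R"
proof -
  have "P \<noteq> 0" using S_j_nonzero S_Suc_j_nonzero poly_S_k_0_nonzero unfolding P_def by simp
  moreover have "degree P = degree T + \<alpha> + \<beta>"
    using S_j_nonzero S_Suc_j_nonzero poly_S_k_0_nonzero degree_S_j degree_T k_le_d unfolding P_def k_def by simp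
  ultimately show "degree Q = \<alpha> + \<beta>" "R = 0 \<or> degree R < d - k" "P = Q * T + monom 1 \<beta> * R"
    using squo_srem_monom_mult[OF _ coeff_T_0] degree_T unfolding Q_def R_def S_Suc_j_eq by auto
qed

lemma coeff_Q_top: "coeff Q (\<alpha> + \<beta>) = poly (S k) 0 * lead_coeff (S j)"
proof -
  have dj: "d - j = (\<alpha> + \<beta>) + (d - k)" using k_le_d unfolding k_def by simp
  have "lead_coeff (S (j + 1)) * poly (S k) 0 * lead_coeff (S j) = coeff P (d - j)"
    unfolding P_def using degree_S_j by simp
  also have "\<dots> = coeff (Q * T) (d - j) + coeff (monom 1 \<beta> * R) (d - j)"
    using P_eq by (metis coeff_add)
  also have "coeff (Q * T) (d - j) = coeff Q (\<alpha> + \<beta>) * lead_coeff T"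
    unfolding dj using degree_Q degree_T by (simp add: coeff_mult_degree_bounds)
  also have "coeff (monom 1 \<beta> * R) (d - j) = 0"
  proof (cases "R = 0")
    case False
    thus ?thesis using degree_R dj
      by (intro coeff_eq_0) (simp add: degree_monom_1_mult)
  qed simp
  finally show ?thesis using lead_coeff_T S_Suc_j_nonzero by (simp add: mult_ac)
qed

definition rem_cof_A :: "complex poly" where
  "rem_cof_A = smult (lead_coeff (S (j + 1)) * poly (S k) 0) (monom 1 (\<alpha> + 1) * cof_A j)
     - Q * cof_A (j + 1)"

definition rem_cof_B :: "complex poly" where
  "rem_cof_B = smult (lead_coeff (S (j + 1)) * poly (S k) 0) (monom 1 (\<alpha> + 1) * cof_B j)
     - Q * cof_B (j + 1)"

lemma rem_cof_bezout: "rem_cof_A * A + rem_cof_B * B = monom 1 k * R"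
proof -
  have "rem_cof_A * A + rem_cof_B * B
      = smult (lead_coeff (S (j + 1)) * poly (S k) 0) (monom 1 (\<alpha> + 1) * (cof_A j * A + cof_B j * B))
        - Q * (cof_A (j + 1) * A + cof_B (j + 1) * B)"
    unfolding rem_cof_A_def rem_cof_B_def by (simp add: algebra_simps smult_add_right)
  also have "\<dots> = monom 1 (j + \<alpha>) * (P - Q * T)"
  proof -
    have "monom 1 (\<alpha> + 1) * monom 1 (j - 1) = (monom 1 (j + \<alpha>) :: complex poly)"
      using j by (simp add: mult_monom add.commute)
    thus ?thesis unfolding cof_bezout_j cof_bezout_Suc_j monom_S_Suc_j_eq P_def mult.assoc[symmetric]
      by (simp add: algebra_simps)
  qed
  also have "\<dots> = monom 1 k * R"
    unfolding k_def using P_eq by (simp add: mult_monom mult.assoc[symmetric] add.assoc)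
  finally show ?thesis .
qed

lemma degree_rem_cof: "degree rem_cof_A \<le> k" "degree rem_cof_B \<le> k"
proof -
  have first: "degree (smult a (monom 1 (\<alpha> + 1) * p)) \<le> k" if "degree p \<le> j - 1" for a p
  proof -
    have "degree (monom 1 (\<alpha> + 1) * p) \<le> (\<alpha> + 1) + (j - 1)"
      by (rule degree_mult_le_bounds[OF degree_monom_le that])
    thus ?thesis using degree_smult_le[of a "monom 1 (\<alpha> + 1) * p"] beta_pos j
      unfolding k_def by linarith
  qed
  have second: "degree (Q * p) \<le> k" if "degree p \<le> j" for p
    using degree_mult_le_bounds[OF _ that, of Q "\<alpha> + \<beta>"] degree_Q unfolding k_def by simp
  have "degree (cof_A (j + 1)) \<le> j" "degree (cof_B (j + 1)) \<le> j"
    using degree_cof_A[of "j + 1"] degree_cof_B[of "j + 1"] by simp_all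
  show "degree rem_cof_A \<le> k"
    unfolding rem_cof_A_def using \<open>degree (cof_A (j + 1)) \<le> j\<close>
    by (intro degree_diff_le first second degree_cof_A)
  show "degree rem_cof_B \<le> k"
    unfolding rem_cof_B_def using \<open>degree (cof_B (j + 1)) \<le> j\<close>
    by (intro degree_diff_le first second degree_cof_B)
qed

lemma coeff_rem_cof_B_top:
  "coeff rem_cof_B k = - (poly (S k) 0 * lead_coeff (S j) * coeff (cof_B (j + 1)) j)"
proof -
  have "coeff (monom 1 (\<alpha> + 1) * cof_B j) k = 0"
    using degree_mult_le_bounds[OF degree_monom_le degree_cof_B, of 1 "\<alpha> + 1" j] j beta_pos
    unfolding k_def by (intro coeff_eq_0) simp
  moreover have "coeff (Q * cof_B (j + 1)) k = coeff Q (\<alpha> + \<beta>) * coeff (cof_B (j + 1)) j"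
    using coeff_mult_degree_bounds[OF _ degree_cof_B, of Q "\<alpha> + \<beta>" "j + 1"] degree_Q
    unfolding k_def by (simp add: add_ac)
  ultimately show ?thesis unfolding rem_cof_B_def coeff_Q_top by simp
qed

lemma rem_cof_proportional:
  "smult (coeff (cof_B (k + 1)) k) rem_cof_A = smult (coeff rem_cof_B k) (cof_A (k + 1))"
  "smult (coeff (cof_B (k + 1)) k) rem_cof_B = smult (coeff rem_cof_B k) (cof_B (k + 1))"
proof -
  have "degree (monom 1 k * R) < d"
  proof (cases "R = 0")
    case False
    thus ?thesis using degree_R k_le_d by (simp add: degree_monom_1_mult)
  qed (use j in simp)
  thus "smult (coeff (cof_B (k + 1)) k) rem_cof_A = smult (coeff rem_cof_B k) (cof_A (k + 1))"
    "smult (coeff (cof_B (k + 1)) k) rem_cof_B = smult (coeff rem_cof_B k) (cof_B (k + 1))"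
    using proportional_to_cof[of "k + 1" rem_cof_A rem_cof_B] degree_rem_cof
    unfolding rem_cof_bezout by auto
qed

lemma cof_cross_rem_cof:
  "cof_A j * rem_cof_B - cof_B j * rem_cof_A = - smult (coeff \<Delta> (j - 1)) (monom 1 (j - 1) * Q)"
proof -
  have "cof_A j * rem_cof_B - cof_B j * rem_cof_A = - (Q * \<Delta>)"
    unfolding rem_cof_A_def rem_cof_B_def \<Delta>_def
    by (simp add: algebra_simps mult_smult_left mult_smult_right)
  moreover have "Q * \<Delta> = smult (coeff \<Delta> (j - 1)) (monom 1 (j - 1) * Q)"
    by (subst \<Delta>_eq_monom) (metis mult.commute mult.right_neutral smult_monom_mult)
  ultimately show ?thesis by simp
qed

lemma monom_mult_Q_eq:
  obtains e where "monom 1 (j - 1) * Q = smult ((-1) ^ e) (cof_A j * cof_B (k + 1) - cof_B j * cof_A (k + 1))"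
proof -
  let ?W = "cof_A j * cof_B (k + 1) - cof_B j * cof_A (k + 1)"
  obtain e where z: "coeff (cof_B (k + 1)) k = (-1) ^ e * lead_coeff A * poly (S k) 0"
    using coeff_cof_B_top[of "k + 1"] k_pos by auto
  define \<kappa> where "\<kappa> = lead_coeff A * poly (S k) 0 * coeff \<Delta> (j - 1)"
  have "\<kappa> \<noteq> 0"
    using A_nonzero poly_S_k_0_nonzero coeff_\<Delta>_nonzero unfolding \<kappa>_def by simp
  have y: "coeff rem_cof_B k = - \<kappa>"
    unfolding coeff_rem_cof_B_top \<kappa>_def using coeff_\<Delta>_mult_lead_coeff_A by (simp add: mult_ac)
  have "smult (coeff (cof_B (k + 1)) k) (cof_A j * rem_cof_B - cof_B j * rem_cof_A)
      = cof_A j * smult (coeff (cof_B (k + 1)) k) rem_cof_B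
        - cof_B j * smult (coeff (cof_B (k + 1)) k) rem_cof_A"
    by (simp add: smult_diff_right)
  also have "\<dots> = smult (coeff rem_cof_B k) ?W"
    unfolding rem_cof_proportional by (simp add: smult_diff_right mult_smult_right)
  finally have "smult \<kappa> (smult ((-1) ^ e) (monom 1 (j - 1) * Q)) = smult \<kappa> ?W"
    unfolding cof_cross_rem_cof z y \<kappa>_def by (simp add: mult_ac)
  hence "smult ((-1) ^ e) (monom 1 (j - 1) * Q) = ?W"
    by (rule smult_cancel[OF \<open>\<kappa> \<noteq> 0\<close>])
  hence "smult ((-1) ^ e) ?W = smult ((-1) ^ e * (-1) ^ e) (monom 1 (j - 1) * Q)"
    by (metis smult_smult)
  moreover have "(-1 :: complex) ^ e * (-1) ^ e = 1" by (simp flip: power_mult_distrib)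
  ultimately have "monom 1 (j - 1) * Q = smult ((-1) ^ e) ?W" by simp
  thus thesis by (rule that)
qed

lemma squo_srem_in_Dpoly:
  assumes D: "subring_C D" "in_Dpoly D A" "in_Dpoly D B"
  shows "in_Dpoly D Q" and "in_Dpoly D R"
proof -
  have zero: "0 \<in> D" using D(1) unfolding subring_C_def by simp
  obtain e where e: "monom 1 (j - 1) * Q
      = smult ((-1) ^ e) (cof_A j * cof_B (k + 1) - cof_B j * cof_A (k + 1))"
    by (rule monom_mult_Q_eq)
  have "in_Dpoly D (monom 1 (j - 1) * Q)"
    unfolding e using cof_in_Dpoly[OF D]
    by (intro in_Dpoly_smult in_Dpoly_diff in_Dpoly_mult subring_C_neg_one_power D(1))
  thus Q: "in_Dpoly D Q" using in_Dpoly_monom_1_mult_iff[OF zero] by simp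
  have S: "in_Dpoly D (S i)" if "1 \<le> i" for i using S_in_Dpoly[OF D that] .
  hence "in_Dpoly D T"
    using S_Suc_j_eq in_Dpoly_monom_1_mult_iff[OF zero] by (metis le_add2)
  moreover have "lead_coeff (S (j + 1)) * poly (S k) 0 \<in> D"
    using S[of "j + 1"] S[OF k_pos] D(1) unfolding in_Dpoly_def subring_C_def poly_0_coeff_0 by simp
  hence "in_Dpoly D P" unfolding P_def using S[OF j(1)] D(1) by (rule in_Dpoly_smult[rotated])
  ultimately have "in_Dpoly D (monom 1 \<beta> * R)"
    using P_eq Q D(1) by (metis add_diff_cancel_left' in_Dpoly_diff in_Dpoly_mult)
  thus "in_Dpoly D R" using in_Dpoly_monom_1_mult_iff[OF zero] by simp
qed

end

theorem proposition5:
  fixes D :: "complex set" and A B :: "complex poly" and j \<alpha> \<beta> :: nat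
  assumes "subring_C D"
    and "in_Dpoly D A" and "in_Dpoly D B"
    and "degree B = degree A"
    and "val A = 0" and "val B = 0"
    and "1 \<le> j" and "j \<le> degree A - 1"
    and "defective A B j \<alpha> \<beta>"
  shows "in_Dpoly D (squo (smult (lead_coeff (symsubres A B (int j + 1))
                                  * poly (symsubres A B (int (j + \<alpha> + \<beta>))) 0)
                            (symsubres A B (int j)))
                      (symsubres A B (int j + 1)))
       \<and> in_Dpoly D (srem (smult (lead_coeff (symsubres A B (int j + 1))
                                  * poly (symsubres A B (int (j + \<alpha> + \<beta>))) 0)
                            (symsubres A B (int j)))
                      (symsubres A B (int j + 1)))"
proof -
  interpret sres A B "degree A" using assms(4) by unfold_locales simp_all
  have S_Suc: "symsubres A B (int j + 1) = S (j + 1)" by (simp add: add.commute)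
  show ?thesis
  proof (cases "j + \<beta> \<le> degree A")
    case True
    have "coeff A 0 \<noteq> 0"
      using assms(5,7,8) unfolding val_def by (auto simp: poly_0_coeff_0[symmetric] order_root)
    then interpret defective_sres A B "degree A" j \<alpha> \<beta>
      using assms(7-9) True by unfold_locales auto
    show ?thesis
      using squo_srem_in_Dpoly[OF assms(1-3)] unfolding S_Suc Q_def R_def P_def k_def by simp
  next
    case False
    thus ?thesis
      using degenerate_defective[OF assms(9)] squo_srem_0 in_Dpoly_0[OF assms(1)] assms(9)
      unfolding S_Suc defective_def Let_def by auto
  qed
qed

end
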